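(* Let $n,m,\ell$ be positive integers. If $f:\mathcal{D}(n)\to\mathcal{D}(m)$ and $g:\mathcal{D}(m)\to\mathcal{D}(\ell)$ are reducing, then so is $g\circ f:\mathcal{D}(n)\to\mathcal{D}(\ell)$.
   Context: For a positive integer $n$, $\mathcal{D}(n)$ is the set of positive divisors of $n$, and $\lambda(n)$ is the least prime factor of $n$ if $n\ge2$, with $\lambda(1)=1$. For positive integers $m,n$, a function $f:\mathcal{D}(n)\to\mathcal{D}(m)$ is called reducing if for all $d,d'\in\mathcal{D}(n)$: (a) $f(d)\le d$; (b) $\frac{m/f(d)}{n/d}\le\min\{1,\ \lambda(m/f(d))/\lambda(n/d)\}$; (c) if $f(d)=2^if(d')$ for some $i\in\mathbb{Z}$, then $d=2^jd'$ for some $j\in\mathbb{Z}$. *)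

theory Defs
  imports Complex_Main "HOL-Computational_Algebra.Primes"
begin

definition Dv :: "nat \<Rightarrow> nat set" where
  "Dv n = {d. 0 < d \<and> d dvd n}"

definition lpf :: "nat \<Rightarrow> nat" where
  "lpf n = (if n \<ge> 2 then Min {p. prime p \<and> p dvd n} else 1)"

text \<open>f : D(n) -> D(m) is reducing (f is only relevant on D(n)).\<close>
definition reducing :: "nat \<Rightarrow> nat \<Rightarrow> (nat \<Rightarrow> nat) \<Rightarrow> bool" where
  "reducing n m f \<longleftrightarrow>
     (\<forall>d\<in>Dv n. f d \<in> Dv m) \<and>
     (\<forall>d\<in>Dv n. f d \<le> d) \<and>
     (\<forall>d\<in>Dv n. (real m / real (f d)) / (real n / real d)
                  \<le> min 1 (real (lpf (m div f d)) / real (lpf (n div d)))) \<and>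
     (\<forall>d\<in>Dv n. \<forall>d'\<in>Dv n.
        (\<exists>i::int. real (f d) = 2 powi i * real (f d')) \<longrightarrow>
        (\<exists>j::int. real d = 2 powi j * real d'))"

end

theory Submission
  imports Defs
begin

text \<open>Condition (c) chains through
  the middle divisor, and (a) is transitivity of \<open>\<le>\<close>. For (b), the ratio of \<open>g \<circ> f\<close> at \<open>d\<close> is the
  product of the ratio of \<open>g\<close> at \<open>f d\<close> and that of \<open>f\<close> at \<open>d\<close>, and the bounds \<open>min 1 (r/p)\<close> and \<open>min 1 (p/q)\<close> multiply to at
  most \<open>min 1 (r/q)\<close>: the least prime factor \<open>p\<close> of \<open>m div f d\<close> cancels.\<close>

lemma mult_le_min_one_divide_trans:
  fixes x y p q r :: real
  assumes "0 \<le> x" "0 \<le> y" "0 \<le> q" "0 \<le> r"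
    and x: "x \<le> min 1 (p / q)" and y: "y \<le> min 1 (r / p)"
  shows "y * x \<le> min 1 (r / q)"
proof (cases "p > 0")
  case True
  have "y * x \<le> 1 * 1"
    using assms by (intro mult_mono) auto
  moreover have "y * x \<le> (r / p) * (p / q)"
    using assms by (intro mult_mono) auto
  ultimately show ?thesis
    using True by simp
next
  case False
  then have "p / q \<le> 0"
    using \<open>0 \<le> q\<close> by (simp add: divide_nonpos_nonneg)
  then have "x = 0"
    using \<open>0 \<le> x\<close> x by linarith
  then show ?thesis
    using assms by simp
qed

lemma reducing_Dv: "reducing n m f \<Longrightarrow> d \<in> Dv n \<Longrightarrow> f d \<in> Dv m"
  unfolding reducing_def by blast

lemma reducing_le: "reducing n m f \<Longrightarrow> d \<in> Dv n \<Longrightarrow> f d \<le> d"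
  unfolding reducing_def by blast

lemma reducing_ratio_le:
  "reducing n m f \<Longrightarrow> d \<in> Dv n \<Longrightarrow>
     (real m / real (f d)) / (real n / real d) \<le> min 1 (real (lpf (m div f d)) / real (lpf (n div d)))"
  unfolding reducing_def by blast

lemma reducing_powi_two:
  "reducing n m f \<Longrightarrow> d \<in> Dv n \<Longrightarrow> d' \<in> Dv n \<Longrightarrow>
     \<exists>i::int. real (f d) = 2 powi i * real (f d') \<Longrightarrow> \<exists>j::int. real d = 2 powi j * real d'"
  unfolding reducing_def by blast

lemma reducing_ratio_comp:
  assumes f: "reducing n m f" and g: "reducing m l g" and "0 < m" and d: "d \<in> Dv n"
  shows "(real l / real (g (f d))) / (real n / real d)
           \<le> min 1 (real (lpf (l div g (f d))) / real (lpf (n div d)))"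
proof -
  have "f d > 0"
    using reducing_Dv[OF f d] by (simp add: Dv_def)
  then have "(real l / real (g (f d))) / (real n / real d)
      = ((real l / real (g (f d))) / (real m / real (f d))) * ((real m / real (f d)) / (real n / real d))"
    using \<open>0 < m\<close> by simp
  also have "\<dots> \<le> min 1 (real (lpf (l div g (f d))) / real (lpf (n div d)))"
    by (intro mult_le_min_one_divide_trans[OF _ _ _ _ reducing_ratio_le[OF f d]
          reducing_ratio_le[OF g reducing_Dv[OF f d]]]) auto
  finally show ?thesis .
qed

theorem lemma3p7:
  fixes n m l :: nat and f g :: "nat \<Rightarrow> nat"
  assumes "0 < n" "0 < m" "0 < l"
    and "reducing n m f" and "reducing m l g"
  shows "reducing n l (g \<circ> f)"
proof -
  note f = \<open>reducing n m f\<close> and g = \<open>reducing m l g\<close>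
  have fd: "f d \<in> Dv m" if "d \<in> Dv n" for d
    using reducing_Dv[OF f that] .
  show ?thesis
    unfolding reducing_def comp_def
  proof (intro conjI ballI impI)
    fix d assume d: "d \<in> Dv n"
    show "g (f d) \<in> Dv l"
      using reducing_Dv[OF g fd[OF d]] .
    show "g (f d) \<le> d"
      using reducing_le[OF g fd[OF d]] reducing_le[OF f d] by linarith
    show "(real l / real (g (f d))) / (real n / real d)
            \<le> min 1 (real (lpf (l div g (f d))) / real (lpf (n div d)))"
      using reducing_ratio_comp[OF f g \<open>0 < m\<close> d] .
  next
    fix d d' assume d: "d \<in> Dv n" and d': "d' \<in> Dv n"
      and "\<exists>i::int. real (g (f d)) = 2 powi i * real (g (f d'))"
    then have "\<exists>i::int. real (f d) = 2 powi i * real (f d')"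
      using reducing_powi_two[OF g fd[OF d] fd[OF d']] by blast
    then show "\<exists>j::int. real d = 2 powi j * real d'"
      using reducing_powi_two[OF f d d'] by blast
  qed
qed

end
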